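(* Let $G$ be a connected graph and let $H$ be a hypergraph of degree 2. If $G$ is a minor of $H^d$, then $G^d$ is a hypergraph dilution of $H$.
   Context: A hypergraph $H$ is a pair $(V(H),E(H))$ with $E(H)\subseteq 2^{V(H)}$ a set; graphs are hypergraphs all of whose edges have size 2. For a vertex $v$, $I_v$ is the set of edges containing $v$; the degree of $H$ is $\max_v |I_v|$. The dual $H^d$ of $H$ has $V(H^d)=E(H)$ and $E(H^d)=\{I_v : v\in V(H)\}$. A graph $G$ is a minor of a hypergraph $F$ if it is a minor of the primal graph of $F$ (vertices $V(F)$, with $x,y$ adjacent iff some edge of $F$ contains both), i.e., there is $\mu: V(G)\to 2^{V(F)}$ with each $\mu(v)$ connected, the $\mu(v)$ pairwise disjoint, and for adjacent $u,v$ in $G$ some primal edge joins $\mu(u)$ and $\mu(v)$. $H$ is a hypergraph dilution of $H'$ if $H$ is isomorphic to a hypergraph reachable from $H'$ by a finite sequence of: deleting a vertex (from the vertex set and all edges); deleting an edge that is a proper subset of another edge; merging on a vertex $v$, i.e., replacing all edges of $I_v$ by the single edge $(\bigcup I_v)\setminus\{v\}$. *)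

theory Defs
  imports Main
begin

type_synonym 'a hgraph = "'a set \<times> 'a set set"

definition hypergraph :: "'a hgraph \<Rightarrow> bool" where
  "hypergraph H \<longleftrightarrow> snd H \<subseteq> Pow (fst H)"

definition is_graph :: "'a hgraph \<Rightarrow> bool" where
  "is_graph G \<longleftrightarrow> hypergraph G \<and> (\<forall>e\<in>snd G. card e = 2)"

definition inc :: "'a hgraph \<Rightarrow> 'a \<Rightarrow> 'a set set" where
  "inc H v = {e \<in> snd H. v \<in> e}"

definition has_degree :: "'a hgraph \<Rightarrow> nat \<Rightarrow> bool" where
  "has_degree H k \<longleftrightarrow> (\<forall>v\<in>fst H. card (inc H v) \<le> k) \<and> (\<exists>v\<in>fst H. card (inc H v) = k)"

definition dual :: "'a hgraph \<Rightarrow> 'a set hgraph" where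
  "dual H = (snd H, inc H ` fst H)"

definition primal_adj :: "'a hgraph \<Rightarrow> 'a \<Rightarrow> 'a \<Rightarrow> bool" where
  "primal_adj F x y \<longleftrightarrow> x \<noteq> y \<and> (\<exists>e\<in>snd F. x \<in> e \<and> y \<in> e)"

definition connected_in :: "'a hgraph \<Rightarrow> 'a set \<Rightarrow> bool" where
  "connected_in F S \<longleftrightarrow> S \<noteq> {} \<and> S \<subseteq> fst F \<and>
     (\<forall>x\<in>S. \<forall>y\<in>S. (\<lambda>a b. a \<in> S \<and> b \<in> S \<and> primal_adj F a b)\<^sup>*\<^sup>* x y)"

definition connected_graph :: "'a hgraph \<Rightarrow> bool" where
  "connected_graph G \<longleftrightarrow> connected_in G (fst G)"

definition is_minor :: "'b hgraph \<Rightarrow> 'a hgraph \<Rightarrow> bool" where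
  "is_minor G F \<longleftrightarrow> (\<exists>\<mu> :: 'b \<Rightarrow> 'a set.
      (\<forall>v\<in>fst G. connected_in F (\<mu> v)) \<and>
      (\<forall>u\<in>fst G. \<forall>v\<in>fst G. u \<noteq> v \<longrightarrow> \<mu> u \<inter> \<mu> v = {}) \<and>
      (\<forall>u\<in>fst G. \<forall>v\<in>fst G. primal_adj G u v \<longrightarrow>
          (\<exists>x\<in>\<mu> u. \<exists>y\<in>\<mu> v. primal_adj F x y)))"

definition dil_step :: "'a hgraph \<Rightarrow> 'a hgraph \<Rightarrow> bool" where
  "dil_step H H' \<longleftrightarrow>
     (\<exists>v\<in>fst H. H' = (fst H - {v}, (\<lambda>e. e - {v}) ` snd H)) \<or>
     (\<exists>e\<in>snd H. (\<exists>e'\<in>snd H. e \<subset> e') \<and> H' = (fst H, snd H - {e})) \<or>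
     (\<exists>v\<in>fst H. H' = (fst H, (snd H - inc H v) \<union> {\<Union>(inc H v) - {v}}))"

definition hiso :: "'a hgraph \<Rightarrow> 'b hgraph \<Rightarrow> bool" where
  "hiso H K \<longleftrightarrow> (\<exists>f. bij_betw f (fst H) (fst K) \<and> (\<lambda>e. f ` e) ` snd H = snd K)"

definition dilution :: "'b hgraph \<Rightarrow> 'a hgraph \<Rightarrow> bool" where
  "dilution H H' \<longleftrightarrow> (\<exists>K. dil_step\<^sup>*\<^sup>* H' K \<and> hiso K H)"

end

theory Submission
  imports Defs "HOL-Library.Disjoint_Sets"
begin

(* Let \<mu> be a model of G in H^d, so each branch set \<mu> x is a set of edges of H that is
   connected in H^d. As H has degree 2, two edges of H are adjacent in H^d exactly when they are
   the only two edges at some vertex of H. Merging H on every vertex all of whose edges lie in one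
   branch set therefore fuses each branch set \<mu> x into one edge, by connectivity, and never fuses
   edges of different branch sets. For every edge ab of G choose a vertex of H whose edges meet
   \<mu> a and \<mu> b; it exists because a and b are adjacent in the model. After deleting all other
   vertices, the edge obtained from \<mu> x consists of the chosen vertices of the edges of G at x,
   and every other edge has become empty, hence is a proper subset of some edge and can be deleted.
   What is left is G^d, with each edge of G renamed to its chosen vertex. *)

lemma primal_adj_dual:
  "primal_adj (dual H) e f \<longleftrightarrow> e \<noteq> f \<and> (\<exists>v\<in>fst H. e \<in> inc H v \<and> f \<in> inc H v)"
  unfolding primal_adj_def dual_def by auto

lemma is_graph_edgeE:
  assumes "is_graph G" "g \<in> snd G"
  obtains a b where "g = {a, b}" "a \<noteq> b" "a \<in> fst G" "b \<in> fst G"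
proof -
  have "card g = 2" "g \<subseteq> fst G"
    using assms unfolding is_graph_def hypergraph_def by auto
  then show thesis using that by (metis card_2_iff insert_subset)
qed

lemma connected_in_subset_if_closed:
  assumes "connected_in F S" "a \<in> S" "a \<in> C"
    and closed: "\<And>b c. b \<in> S \<Longrightarrow> c \<in> S \<Longrightarrow> primal_adj F b c \<Longrightarrow> b \<in> C \<Longrightarrow> c \<in> C"
  shows "S \<subseteq> C"
proof
  fix c assume "c \<in> S"
  then have "(\<lambda>b c. b \<in> S \<and> c \<in> S \<and> primal_adj F b c)\<^sup>*\<^sup>* a c"
    using assms(1,2) unfolding connected_in_def by blast
  then show "c \<in> C"
  proof (induction rule: rtranclp_induct)
    case base
    show ?case by (rule assms(3))
  next
    case (step b c)
    then show ?case using closed[of b c] by blast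
  qed
qed

lemma hiso_image_hgraph:
  assumes "inj_on f V" "\<forall>e\<in>E. e \<subseteq> V"
  shows "hiso (f ` V, image f ` E) (V, E)"
proof -
  have "inv_into V f ` f ` e = e" if "e \<in> E" for e
    using assms(2) that by (intro inv_into_image_cancel[OF assms(1)]) blast
  then have "image (inv_into V f) ` image f ` E = E"
    by (simp add: image_image cong: image_cong)
  then show ?thesis
    unfolding hiso_def using bij_betw_inv_into[OF inj_on_imp_bij_betw[OF assms(1)]]
    by (intro exI[of _ "inv_into V f"]) simp
qed

lemma dil_steps_drop_empty_edge:
  assumes "S \<subseteq> E" "E \<subseteq> insert {} S" "S \<noteq> {}"
  shows "dil_step\<^sup>*\<^sup>* (V, E) (V, S)"
proof (cases "{} \<in> E \<and> {} \<notin> S")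
  case True
  then obtain e where "e \<in> E" "{} \<subset> e"
    using assms(1,3) by blast
  then have "dil_step (V, E) (V, E - {{}})"
    unfolding dil_step_def using True by (intro disjI2 disjI1 bexI[of _ "{}"]) auto
  moreover have "E - {{}} = S"
    using assms True by auto
  ultimately show ?thesis by auto
next
  case False
  then have "E = S" using assms(1,2) by auto
  then show ?thesis by simp
qed

lemma partition_on_merge:
  assumes "partition_on A P" "Q \<subseteq> P" "Q \<noteq> {}"
  shows "partition_on A (insert (\<Union>Q) (P - Q))"
proof -
  have "disjnt C (\<Union>(P - Q))" if "C \<in> Q" for C
    using pairwiseD[OF partition_onD2[OF assms(1)]] assms(2) that by auto
  then have disj: "disjnt (\<Union>Q) (\<Union>(P - Q))"
    by simp
  moreover have "partition_on (A - \<Union>Q) (P - Q)"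
  proof -
    have "\<Union>(P - Q) = A - \<Union>Q"
      using disj partition_onD1[OF assms(1)] assms(2) unfolding disjnt_def by blast
    moreover have "disjoint (P - Q)"
      by (rule pairwise_subset[OF partition_onD2[OF assms(1)]]) blast
    ultimately show ?thesis
      using partition_onD3[OF assms(1)] unfolding partition_on_def by blast
  qed
  moreover have "\<Union>Q \<subseteq> A"
    using assms(2) partition_onD1[OF assms(1)] by blast
  moreover have "\<Union>Q \<noteq> {}"
  proof -
    obtain C where "C \<in> Q"
      using assms(3) by blast
    moreover have "C \<noteq> {}"
      using \<open>C \<in> Q\<close> assms(2) partition_onD3[OF assms(1)] by blast
    ultimately show ?thesis
      by blast
  qed
  ultimately show ?thesis
    by (simp add: partition_on_insert)
qed

definition merge_blocks :: "'a \<Rightarrow> 'a set set set \<Rightarrow> 'a set set set" where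
  "merge_blocks v P = insert (\<Union>{C \<in> P. v \<in> \<Union>C}) {C \<in> P. v \<notin> \<Union>C}"

lemma partition_on_merge_blocks:
  assumes "partition_on A P" "\<exists>C\<in>P. v \<in> \<Union>C"
  shows "partition_on A (merge_blocks v P)"
proof -
  let ?Q = "{C \<in> P. v \<in> \<Union>C}"
  have "merge_blocks v P = insert (\<Union>?Q) (P - ?Q)"
    unfolding merge_blocks_def by blast
  moreover have "partition_on A (insert (\<Union>?Q) (P - ?Q))"
    by (rule partition_on_merge[OF assms(1)]) (use assms(2) in auto)
  ultimately show ?thesis
    by (simp only:)
qed

lemma merge_blocks_refines:
  assumes "C \<in> P"
  shows "\<exists>C'\<in>merge_blocks v P. C \<subseteq> C'"
proof (cases "v \<in> \<Union>C")
  case True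
  then have "C \<subseteq> \<Union>{C \<in> P. v \<in> \<Union>C}"
    using assms by blast
  then show ?thesis
    unfolding merge_blocks_def by (rule bexI) simp
next
  case False
  then show ?thesis
    unfolding merge_blocks_def using assms by (intro bexI[of _ C]) simp_all
qed

(* Merging H on the vertices outside L, which stay behind as isolated vertices, gives
   block_hgraph (fst H) L P for a partition P of the edges of H into the sets of merged edges. *)
definition block_hgraph :: "'a set \<Rightarrow> 'a set \<Rightarrow> 'a set set set \<Rightarrow> 'a hgraph" where
  "block_hgraph V L P = (V, (\<lambda>C. \<Union>C \<inter> L) ` P)"

lemma block_hgraph_singletons:
  assumes "hypergraph H"
  shows "block_hgraph (fst H) (fst H) ((\<lambda>e. {e}) ` snd H) = H"
proof -
  have "\<Union>{e} \<inter> fst H = e" if "e \<in> snd H" for e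
    using assms that unfolding hypergraph_def by auto
  then have "(\<lambda>C. \<Union>C \<inter> fst H) ` (\<lambda>e. {e}) ` snd H = snd H"
    by (simp add: image_image cong: image_cong)
  then show ?thesis unfolding block_hgraph_def by simp
qed

lemma fst_block_hgraph [simp]: "fst (block_hgraph V L P) = V"
  by (simp add: block_hgraph_def)

lemma dil_step_block_hgraph_delete:
  assumes "v \<in> V"
  shows "dil_step (block_hgraph V L P) (block_hgraph (V - {v}) (L - {v}) P)"
  unfolding dil_step_def block_hgraph_def using assms
  by (intro disjI1 bexI[of _ v]) (simp_all add: image_image Int_Diff)

lemma dil_steps_block_hgraph_delete:
  assumes "finite D" "D \<subseteq> V"
  shows "dil_step\<^sup>*\<^sup>* (block_hgraph V L P) (block_hgraph (V - D) (L - D) P)"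
  using assms
proof (induction D rule: finite_induct)
  case empty
  then show ?case by simp
next
  case (insert v D)
  then have "v \<in> V - D" "D \<subseteq> V"
    by auto
  have "dil_step\<^sup>*\<^sup>* (block_hgraph V L P) (block_hgraph (V - D) (L - D) P)"
    using insert.IH \<open>D \<subseteq> V\<close> .
  moreover have "dil_step (block_hgraph (V - D) (L - D) P) (block_hgraph (V - D - {v}) (L - D - {v}) P)"
    using \<open>v \<in> V - D\<close> by (rule dil_step_block_hgraph_delete)
  moreover have "V - D - {v} = V - insert v D" "L - D - {v} = L - insert v D"
    by blast+
  ultimately show ?case
    by (metis rtranclp.rtrancl_into_rtrancl)
qed

lemma dil_step_block_hgraph_merge:
  assumes "v \<in> V" "v \<in> L"
  shows "dil_step (block_hgraph V L P) (block_hgraph V (L - {v}) (merge_blocks v P))"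
proof -
  let ?H = "block_hgraph V L P"
  have inc: "inc ?H v = (\<lambda>C. \<Union>C \<inter> L) ` {C \<in> P. v \<in> \<Union>C}"
    using assms unfolding inc_def block_hgraph_def by auto
  have "(\<lambda>C. \<Union>C \<inter> (L - {v})) ` {C \<in> P. v \<notin> \<Union>C} = snd ?H - inc ?H v"
    using assms unfolding inc unfolding block_hgraph_def by auto
  moreover have "\<Union>(\<Union>{C \<in> P. v \<in> \<Union>C}) \<inter> (L - {v}) = \<Union>(inc ?H v) - {v}"
    unfolding inc by auto
  ultimately have eq: "block_hgraph V (L - {v}) (merge_blocks v P)
      = (fst ?H, (snd ?H - inc ?H v) \<union> {\<Union>(inc ?H v) - {v}})"
    unfolding merge_blocks_def block_hgraph_def[of V "L - {v}"] image_insert by simp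
  show ?thesis
    unfolding dil_step_def by (intro disjI2 bexI[of _ v]) (fact eq, simp add: assms(1))
qed

lemma dil_steps_block_hgraph_merge:
  assumes "finite M" "M \<subseteq> V" "M \<subseteq> L" "I {} P"
    and step: "\<And>v N P. I N P \<Longrightarrow> v \<in> M \<Longrightarrow> I (insert v N) (merge_blocks v P)"
  shows "\<exists>P'. dil_step\<^sup>*\<^sup>* (block_hgraph V L P) (block_hgraph V (L - M) P') \<and> I M P'"
proof -
  have "\<exists>P'. dil_step\<^sup>*\<^sup>* (block_hgraph V L P) (block_hgraph V (L - N) P') \<and> I N P'"
    if "N \<subseteq> M" for N
    using finite_subset[OF that assms(1)] that
  proof (induction N rule: finite_induct)
    case empty
    show ?case using assms(4) by (intro exI[of _ P]) simp
  next
    case (insert v N)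
    then obtain P' where steps: "dil_step\<^sup>*\<^sup>* (block_hgraph V L P) (block_hgraph V (L - N) P')"
      and "I N P'"
      by blast
    have "v \<in> V" "v \<in> L - N"
      using insert assms(2,3) by auto
    then have "dil_step (block_hgraph V (L - N) P') (block_hgraph V (L - N - {v}) (merge_blocks v P'))"
      by (rule dil_step_block_hgraph_merge)
    moreover have "L - N - {v} = L - insert v N"
      by blast
    ultimately have "dil_step (block_hgraph V (L - N) P') (block_hgraph V (L - insert v N) (merge_blocks v P'))"
      by (simp only:)
    moreover have "I (insert v N) (merge_blocks v P')"
      using insert.prems by (intro step[OF \<open>I N P'\<close>]) simp
    ultimately show ?case
      using rtranclp.rtrancl_into_rtrancl[OF steps] by blast
  qed
  then show ?thesis by blast
qed

locale degree2_minor_model =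
  fixes G :: "'b hgraph" and H :: "'a hgraph" and \<mu> :: "'b \<Rightarrow> 'a set set"
  assumes graph: "is_graph G"
    and hypergraph: "hypergraph H" and finite_vertices: "finite (fst H)"
    and finite_edges: "finite (snd H)"
    and degree_le_2: "\<And>v. v \<in> fst H \<Longrightarrow> card (inc H v) \<le> 2"
    and branch_connected: "\<And>x. x \<in> fst G \<Longrightarrow> connected_in (dual H) (\<mu> x)"
    and branch_disjoint: "\<And>x y. x \<in> fst G \<Longrightarrow> y \<in> fst G \<Longrightarrow> x \<noteq> y \<Longrightarrow> \<mu> x \<inter> \<mu> y = {}"
    and branch_adjacent: "\<And>x y. x \<in> fst G \<Longrightarrow> y \<in> fst G \<Longrightarrow> primal_adj G x y \<Longrightarrow>
          \<exists>e\<in>\<mu> x. \<exists>f\<in>\<mu> y. primal_adj (dual H) e f"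
begin

lemma branch_subset_edges: "x \<in> fst G \<Longrightarrow> \<mu> x \<subseteq> snd H"
  using branch_connected unfolding connected_in_def dual_def by auto

lemma branch_nonempty: "x \<in> fst G \<Longrightarrow> \<mu> x \<noteq> {}"
  using branch_connected unfolding connected_in_def by auto

lemma branch_unique: "x \<in> fst G \<Longrightarrow> y \<in> fst G \<Longrightarrow> e \<in> \<mu> x \<Longrightarrow> e \<in> \<mu> y \<Longrightarrow> x = y"
  using branch_disjoint by blast

lemma subset_branch_unique: "x \<in> fst G \<Longrightarrow> y \<in> fst G \<Longrightarrow> S \<subseteq> \<mu> x \<Longrightarrow> S \<inter> \<mu> y \<noteq> {} \<Longrightarrow> y = x"
  using branch_disjoint by blast

lemma graph_edge_subset: "g \<in> snd G \<Longrightarrow> g \<subseteq> fst G"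
  using graph unfolding is_graph_def hypergraph_def by auto

lemma inc_eq_doubleton:
  assumes "v \<in> fst H" "e \<in> inc H v" "f \<in> inc H v" "e \<noteq> f"
  shows "inc H v = {e, f}"
proof -
  have "finite (inc H v)"
    using finite_edges unfolding inc_def by simp
  moreover have "card (inc H v) \<le> card {e, f}"
    using degree_le_2[OF assms(1)] assms(4) by simp
  ultimately show ?thesis
    using assms(2,3) by (metis card_seteq empty_subsetI insert_subset)
qed

definition inner_vertices :: "'a set" where
  "inner_vertices = {v \<in> fst H. inc H v \<noteq> {} \<and> (\<exists>x\<in>fst G. inc H v \<subseteq> \<mu> x)}"

definition merge_invariant :: "'a set \<Rightarrow> 'a set set set \<Rightarrow> bool" where
  "merge_invariant M P \<longleftrightarrow> partition_on (snd H) P \<and>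
     (\<forall>C\<in>P. \<forall>x\<in>fst G. C \<inter> \<mu> x \<noteq> {} \<longrightarrow> C \<subseteq> \<mu> x) \<and> (\<forall>v\<in>M. \<exists>C\<in>P. inc H v \<subseteq> C)"

lemma merge_invariant_singletons: "merge_invariant {} ((\<lambda>e. {e}) ` snd H)"
  unfolding merge_invariant_def by (auto simp: partition_on_singletons)

lemma merge_invariant_insert:
  assumes inv: "merge_invariant M P" and v: "v \<in> inner_vertices"
  shows "merge_invariant (insert v M) (merge_blocks v P)"
proof -
  obtain x where x: "x \<in> fst G" "inc H v \<subseteq> \<mu> x" and star: "inc H v \<noteq> {}"
    using v unfolding inner_vertices_def by auto
  have part: "partition_on (snd H) P"
    and within_branch: "\<And>C y. C \<in> P \<Longrightarrow> y \<in> fst G \<Longrightarrow> C \<inter> \<mu> y \<noteq> {} \<Longrightarrow> C \<subseteq> \<mu> y"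
    and stars: "\<And>u. u \<in> M \<Longrightarrow> \<exists>C\<in>P. inc H u \<subseteq> C"
    using inv unfolding merge_invariant_def by auto
  let ?N = "\<Union>{C \<in> P. v \<in> \<Union>C}"
  have star_subset: "inc H v \<subseteq> ?N"
    using partition_onD1[OF part] unfolding inc_def by blast
  have "C \<subseteq> \<mu> x" if C: "C \<in> P" "v \<in> \<Union>C" for C
  proof -
    obtain e where "e \<in> C" "v \<in> e" using C(2) by blast
    moreover have "e \<in> snd H" using \<open>e \<in> C\<close> C(1) partition_onD1[OF part] by blast
    ultimately have "e \<in> C \<inter> \<mu> x" using x(2) unfolding inc_def by blast
    then show ?thesis using within_branch[OF C(1) x(1)] by blast
  qed
  then have "?N \<subseteq> \<mu> x"
    by blast
  then have "C \<subseteq> \<mu> y" if "C \<in> merge_blocks v P" "y \<in> fst G" "C \<inter> \<mu> y \<noteq> {}" for C y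
    using that within_branch branch_unique[OF that(2) x(1)] unfolding merge_blocks_def by blast
  moreover have "\<exists>C\<in>P. v \<in> \<Union>C"
    using star star_subset by blast
  then have "partition_on (snd H) (merge_blocks v P)"
    by (rule partition_on_merge_blocks[OF part])
  moreover have "\<exists>C\<in>merge_blocks v P. inc H u \<subseteq> C" if u: "u \<in> insert v M" for u
  proof (cases "u = v")
    case True
    show ?thesis
      using star_subset unfolding True merge_blocks_def by (rule bexI) simp
  next
    case False
    then obtain C where "C \<in> P" "inc H u \<subseteq> C"
      using u stars by blast
    moreover obtain C' where "C' \<in> merge_blocks v P" "C \<subseteq> C'"
      using merge_blocks_refines[OF \<open>C \<in> P\<close>] by blast
    ultimately show ?thesis
      by blast
  qed
  ultimately show ?thesis
    unfolding merge_invariant_def by blast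
qed

lemma block_eq_branch_set:
  assumes inv: "merge_invariant inner_vertices P" and "C \<in> P" "x \<in> fst G" "C \<inter> \<mu> x \<noteq> {}"
  shows "C = \<mu> x"
proof
  show "C \<subseteq> \<mu> x" using assms unfolding merge_invariant_def by blast
  obtain e where "e \<in> \<mu> x" "e \<in> C" using assms(4) by blast
  then show "\<mu> x \<subseteq> C"
  proof (rule connected_in_subset_if_closed[OF branch_connected[OF \<open>x \<in> fst G\<close>]])
    fix a b assume ab: "a \<in> \<mu> x" "b \<in> \<mu> x" "primal_adj (dual H) a b" "a \<in> C"
    then obtain v where v: "v \<in> fst H" "a \<in> inc H v" "b \<in> inc H v" "a \<noteq> b"
      unfolding primal_adj_dual by blast
    with ab have "v \<in> inner_vertices"
      using inc_eq_doubleton[OF v] \<open>x \<in> fst G\<close> unfolding inner_vertices_def by auto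
    then obtain C' where "C' \<in> P" "inc H v \<subseteq> C'"
      using inv unfolding merge_invariant_def by blast
    moreover have "disjoint P"
      using inv unfolding merge_invariant_def partition_on_def by blast
    ultimately show "b \<in> C"
      using v ab(4) \<open>C \<in> P\<close> by (metis disjointD disjoint_iff subsetD)
  qed
qed

definition realises :: "'a \<Rightarrow> 'b set \<Rightarrow> bool" where
  "realises v g \<longleftrightarrow> v \<in> fst H \<and> inc H v \<subseteq> \<Union>(\<mu> ` g) \<and> (\<forall>x\<in>g. inc H v \<inter> \<mu> x \<noteq> {})"

lemma realises_exists:
  assumes "g \<in> snd G"
  shows "\<exists>v. realises v g"
proof -
  obtain a b where ab: "g = {a, b}" "a \<noteq> b" "a \<in> fst G" "b \<in> fst G"
    using is_graph_edgeE[OF graph assms] .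
  then have "primal_adj G a b"
    using assms unfolding primal_adj_def by auto
  then obtain e f where "e \<in> \<mu> a" "f \<in> \<mu> b" "primal_adj (dual H) e f"
    using branch_adjacent ab by blast
  moreover from this obtain v where v: "v \<in> fst H" "e \<in> inc H v" "f \<in> inc H v" "e \<noteq> f"
    unfolding primal_adj_dual by blast
  moreover from v have "inc H v = {e, f}"
    by (rule inc_eq_doubleton)
  ultimately have "realises v g"
    unfolding realises_def using ab(1) by auto
  then show ?thesis ..
qed

definition rep :: "'b set \<Rightarrow> 'a" where
  "rep g = (SOME v. realises v g)"

lemma realises_rep: "g \<in> snd G \<Longrightarrow> realises (rep g) g"
  unfolding rep_def using realises_exists by (rule someI_ex)

lemma rep_meets_branch_iff:
  assumes "g \<in> snd G" "x \<in> fst G"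
  shows "inc H (rep g) \<inter> \<mu> x \<noteq> {} \<longleftrightarrow> x \<in> g"
proof
  assume "inc H (rep g) \<inter> \<mu> x \<noteq> {}"
  then obtain e where e: "e \<in> inc H (rep g)" "e \<in> \<mu> x"
    by blast
  then obtain y where "y \<in> g" "e \<in> \<mu> y"
    using realises_rep[OF assms(1)] unfolding realises_def by blast
  moreover have "y \<in> fst G"
    using \<open>y \<in> g\<close> graph_edge_subset[OF assms(1)] by blast
  ultimately show "x \<in> g"
    using branch_unique[OF assms(2) _ e(2)] by blast
next
  assume "x \<in> g"
  then show "inc H (rep g) \<inter> \<mu> x \<noteq> {}"
    using realises_rep[OF assms(1)] unfolding realises_def by blast
qed

lemma inj_on_rep: "inj_on rep (snd G)"
proof (rule inj_onI)
  fix g h assume g: "g \<in> snd G" and h: "h \<in> snd G" and "rep g = rep h"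
  then have "x \<in> g \<longleftrightarrow> x \<in> h" if "x \<in> fst G" for x
    using rep_meets_branch_iff[OF g that] rep_meets_branch_iff[OF h that] by simp
  then show "g = h"
    using graph_edge_subset[OF g] graph_edge_subset[OF h] by blast
qed

lemma rep_not_inner:
  assumes "g \<in> snd G"
  shows "rep g \<notin> inner_vertices"
proof
  assume "rep g \<in> inner_vertices"
  then obtain x where x: "x \<in> fst G" "inc H (rep g) \<subseteq> \<mu> x"
    unfolding inner_vertices_def by auto
  obtain a b where ab: "g = {a, b}" "a \<noteq> b" "a \<in> fst G" "b \<in> fst G"
    using is_graph_edgeE[OF graph assms] .
  have "a = x"
    using subset_branch_unique[OF x(1) ab(3) x(2)] rep_meets_branch_iff[OF assms ab(3)] ab(1) by simp
  moreover have "b = x"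
    using subset_branch_unique[OF x(1) ab(4) x(2)] rep_meets_branch_iff[OF assms ab(4)] ab(1) by simp
  ultimately show False
    using ab(2) by simp
qed

lemma branch_set_trace:
  assumes "x \<in> fst G"
  shows "\<Union>(\<mu> x) \<inter> rep ` snd G = rep ` inc G x"
proof -
  have trace: "rep g \<in> \<Union>(\<mu> x) \<longleftrightarrow> x \<in> g" if "g \<in> snd G" for g
  proof -
    have "rep g \<in> \<Union>(\<mu> x) \<longleftrightarrow> inc H (rep g) \<inter> \<mu> x \<noteq> {}"
      using branch_subset_edges[OF assms] unfolding inc_def by blast
    then show ?thesis
      using rep_meets_branch_iff[OF that assms] by simp
  qed
  have "\<Union>(\<mu> x) \<inter> rep ` snd G = rep ` {g \<in> snd G. rep g \<in> \<Union>(\<mu> x)}"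
    by blast
  also have "{g \<in> snd G. rep g \<in> \<Union>(\<mu> x)} = inc G x"
    unfolding inc_def using trace by blast
  finally show ?thesis .
qed

lemma block_trace_empty:
  assumes "C \<subseteq> snd H" "\<forall>x\<in>fst G. C \<inter> \<mu> x = {}"
  shows "\<Union>C \<inter> rep ` snd G = {}"
proof -
  have "rep g \<notin> e" if g: "g \<in> snd G" and e: "e \<in> C" for g e
  proof
    assume "rep g \<in> e"
    then have "e \<in> inc H (rep g)"
      using assms(1) e unfolding inc_def by blast
    then obtain y where "y \<in> g" "e \<in> \<mu> y"
      using realises_rep[OF g] unfolding realises_def by blast
    then show False
      using assms(2) graph_edge_subset[OF g] e by blast
  qed
  then show ?thesis
    by blast
qed

lemma block_traces:
  assumes inv: "merge_invariant inner_vertices P"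
  shows "(\<lambda>C. \<Union>C \<inter> rep ` snd G) ` P \<subseteq> insert {} ((\<lambda>x. rep ` inc G x) ` fst G)"
    and "(\<lambda>x. rep ` inc G x) ` fst G \<subseteq> (\<lambda>C. \<Union>C \<inter> rep ` snd G) ` P"
proof -
  have blocks: "\<Union>P = snd H"
    using inv unfolding merge_invariant_def partition_on_def by blast
  have "\<Union>C \<inter> rep ` snd G \<in> insert {} ((\<lambda>x. rep ` inc G x) ` fst G)" if C: "C \<in> P" for C
  proof (cases "\<exists>x\<in>fst G. C \<inter> \<mu> x \<noteq> {}")
    case True
    then obtain x where x: "x \<in> fst G" "C \<inter> \<mu> x \<noteq> {}"
      by blast
    then have "\<Union>C \<inter> rep ` snd G = rep ` inc G x"
      using block_eq_branch_set[OF inv C x] branch_set_trace[OF x(1)] by simp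
    then show ?thesis
      using x(1) by blast
  next
    case False
    then have "\<forall>x\<in>fst G. C \<inter> \<mu> x = {}"
      by blast
    moreover have "C \<subseteq> snd H"
      using C blocks by blast
    ultimately show ?thesis
      using block_trace_empty by simp
  qed
  then show "(\<lambda>C. \<Union>C \<inter> rep ` snd G) ` P \<subseteq> insert {} ((\<lambda>x. rep ` inc G x) ` fst G)"
    by (rule image_subsetI)
  have "rep ` inc G x \<in> (\<lambda>C. \<Union>C \<inter> rep ` snd G) ` P" if x: "x \<in> fst G" for x
  proof -
    obtain e where e: "e \<in> \<mu> x"
      using branch_nonempty[OF x] by blast
    then obtain C where C: "C \<in> P" "e \<in> C"
      using branch_subset_edges[OF x] blocks by blast
    then have "C = \<mu> x"
      using block_eq_branch_set[OF inv C(1) x] e by blast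
    then have "rep ` inc G x = \<Union>C \<inter> rep ` snd G"
      using branch_set_trace[OF x] by simp
    then show ?thesis
      using C(1) by (rule image_eqI)
  qed
  then show "(\<lambda>x. rep ` inc G x) ` fst G \<subseteq> (\<lambda>C. \<Union>C \<inter> rep ` snd G) ` P"
    by (rule image_subsetI)
qed

theorem dilution_dual:
  assumes "fst G \<noteq> {}"
  shows "dilution (dual G) H"
proof -
  let ?T = "rep ` snd G"
  let ?D = "(\<lambda>x. rep ` inc G x) ` fst G"
  have "finite inner_vertices" "inner_vertices \<subseteq> fst H"
    using finite_vertices unfolding inner_vertices_def by auto
  from dil_steps_block_hgraph_merge[OF this this(2) merge_invariant_singletons merge_invariant_insert,
      unfolded block_hgraph_singletons[OF hypergraph]]
  obtain P where merge: "dil_step\<^sup>*\<^sup>* H (block_hgraph (fst H) (fst H - inner_vertices) P)"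
    and inv: "merge_invariant inner_vertices P"
    by blast
  have "?T \<subseteq> fst H" "?T \<inter> inner_vertices = {}"
    using realises_rep rep_not_inner unfolding realises_def by auto
  then have "fst H - (fst H - ?T) = ?T" "fst H - inner_vertices - (fst H - ?T) = ?T"
    by auto
  moreover have "dil_step\<^sup>*\<^sup>* (block_hgraph (fst H) (fst H - inner_vertices) P)
      (block_hgraph (fst H - (fst H - ?T)) (fst H - inner_vertices - (fst H - ?T)) P)"
    using finite_vertices by (intro dil_steps_block_hgraph_delete) auto
  ultimately have delete: "dil_step\<^sup>*\<^sup>* (block_hgraph (fst H) (fst H - inner_vertices) P) (block_hgraph ?T ?T P)"
    by (simp only:)
  have drop: "dil_step\<^sup>*\<^sup>* (block_hgraph ?T ?T P) (?T, ?D)"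
    unfolding block_hgraph_def using block_traces[OF inv] assms
    by (intro dil_steps_drop_empty_edge) auto
  have "hiso (?T, image rep ` inc G ` fst G) (snd G, inc G ` fst G)"
    using inj_on_rep by (rule hiso_image_hgraph) (auto simp: inc_def)
  then have "hiso (?T, ?D) (dual G)"
    by (simp add: dual_def image_image)
  moreover have "dil_step\<^sup>*\<^sup>* H (?T, ?D)"
    using rtranclp_trans[OF rtranclp_trans[OF merge delete] drop] .
  ultimately show ?thesis
    unfolding dilution_def by blast
qed

end

theorem lemma4p3:
  fixes G :: "'b hgraph" and H :: "'a hgraph"
  assumes "is_graph G" and "finite (fst G)" and "connected_graph G"
    and "hypergraph H" and "finite (fst H)" and "finite (snd H)"
    and "has_degree H 2"
    and "is_minor G (dual H)"
  shows "dilution (dual G) H"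
proof -
  obtain \<mu> :: "'b \<Rightarrow> 'a set set" where \<mu>:
    "\<forall>x\<in>fst G. connected_in (dual H) (\<mu> x)"
    "\<forall>x\<in>fst G. \<forall>y\<in>fst G. x \<noteq> y \<longrightarrow> \<mu> x \<inter> \<mu> y = {}"
    "\<forall>x\<in>fst G. \<forall>y\<in>fst G. primal_adj G x y \<longrightarrow> (\<exists>e\<in>\<mu> x. \<exists>f\<in>\<mu> y. primal_adj (dual H) e f)"
    using assms(8) unfolding is_minor_def by blast
  have "\<And>v. v \<in> fst H \<Longrightarrow> card (inc H v) \<le> 2"
    using assms(7) unfolding has_degree_def by blast
  then interpret degree2_minor_model G H \<mu>
    by (unfold_locales; use assms(1,4-6) \<mu> in blast)
  show ?thesis
    using assms(3) unfolding connected_graph_def connected_in_def by (intro dilution_dual) simp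
qed

end
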